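(* Let $B$ be a board with $c=3$ colors. Then $B$ has no perfect layout if any of the following holds: (a) some sink is two cells away from three sides of the boundary and is adjacent to another sink; (b) some sink is two cells away from two perpendicular (incident) sides of the boundary and is adjacent to the two other sinks; (c) some sink is two cells away from two opposite sides of the boundary and is adjacent to the two other sinks; (d) some sink is two cells away from three sides of the boundary and, in the remaining direction, exactly one blank cell separates it from another sink which is adjacent to the third sink.
   Context: A board is an $m\times n$ grid of unit cells in which exactly $c$ cells are sinks, one of each of $c$ colors, and all other cells are empty. A layout places, in some of the empty cells, arrows, each having one of the $c$ colors and one of the four cardinal directions. A packet of color $i$ may enter the grid through any unit edge of the outer boundary of the grid, into the adjacent cell, moving perpendicular to that edge into the grid; it moves one cell at a time in its current direction, and whenever it enters a cell containing an arrow of color $i$ its direction becomes that arrow's direction (arrows of other colors are ignored). The packet succeeds if it enters the sink of color $i$; it fails if it enters a sink of another color, leaves the grid, or travels forever without reaching a sink. A perfect layout is a layout in which every packet of every color entering through every boundary edge succeeds. A sink is "two cells away" from a side of the boundary if, in the straight line from the sink to that side (along its row or column), there are exactly two cells between the sink and that side, both empty. Two sinks are adjacent if their cells share an edge. *)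

theory Defs
  imports Main
begin

type_synonym cell = "int \<times> int"   (* (row, column); rows grow downward *)

datatype dir = North | East | South | West

fun delta :: "dir \<Rightarrow> int \<times> int" where
  "delta North = (-1, 0)"
| "delta South = (1, 0)"
| "delta East = (0, 1)"
| "delta West = (0, -1)"

fun opp :: "dir \<Rightarrow> dir" where
  "opp North = South" | "opp South = North" | "opp East = West" | "opp West = East"

definition shift :: "cell \<Rightarrow> dir \<Rightarrow> int \<Rightarrow> cell" where
  "shift p d k = (fst p + k * fst (delta d), snd p + k * snd (delta d))"

definition in_grid :: "nat \<Rightarrow> nat \<Rightarrow> cell \<Rightarrow> bool" where
  "in_grid m n p \<longleftrightarrow> 0 \<le> fst p \<and> fst p < int m \<and> 0 \<le> snd p \<and> snd p < int n"

text \<open>A board: an m x n grid with c sinks, sink i being the sink of colour i (i < c).\<close>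
definition board :: "nat \<Rightarrow> nat \<Rightarrow> nat \<Rightarrow> (nat \<Rightarrow> cell) \<Rightarrow> bool" where
  "board m n c sink \<longleftrightarrow> inj_on sink {..<c} \<and> (\<forall>i<c. in_grid m n (sink i))"

definition is_sink :: "nat \<Rightarrow> (nat \<Rightarrow> cell) \<Rightarrow> cell \<Rightarrow> bool" where
  "is_sink c sink p \<longleftrightarrow> p \<in> sink ` {..<c}"

definition empty_cell :: "nat \<Rightarrow> nat \<Rightarrow> nat \<Rightarrow> (nat \<Rightarrow> cell) \<Rightarrow> cell \<Rightarrow> bool" where
  "empty_cell m n c sink p \<longleftrightarrow> in_grid m n p \<and> \<not> is_sink c sink p"

definition layout :: "nat \<Rightarrow> nat \<Rightarrow> nat \<Rightarrow> (nat \<Rightarrow> cell) \<Rightarrow> (cell \<Rightarrow> (nat \<times> dir) option) \<Rightarrow> bool" where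
  "layout m n c sink L \<longleftrightarrow>
     (\<forall>p a. L p = Some a \<longrightarrow> empty_cell m n c sink p \<and> fst a < c)"

definition turn :: "(cell \<Rightarrow> (nat \<times> dir) option) \<Rightarrow> nat \<Rightarrow> cell \<Rightarrow> dir \<Rightarrow> dir" where
  "turn L i p d = (case L p of Some (j, d') \<Rightarrow> if j = i then d' else d | None \<Rightarrow> d)"

text \<open>Trajectory of a packet of colour i entering cell q0 moving in direction d0:
  the k-th cell entered and the direction after entering it.\<close>
fun traj :: "(cell \<Rightarrow> (nat \<times> dir) option) \<Rightarrow> nat \<Rightarrow> cell \<Rightarrow> dir \<Rightarrow> nat \<Rightarrow> cell \<times> dir" where
  "traj L i q0 d0 0 = (q0, turn L i q0 d0)"
| "traj L i q0 d0 (Suc k) =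
     (let (p, d) = traj L i q0 d0 k; q = shift p d 1 in (q, turn L i q d))"

definition succeeds :: "nat \<Rightarrow> nat \<Rightarrow> nat \<Rightarrow> (nat \<Rightarrow> cell) \<Rightarrow> (cell \<Rightarrow> (nat \<times> dir) option)
    \<Rightarrow> nat \<Rightarrow> cell \<Rightarrow> dir \<Rightarrow> bool" where
  "succeeds m n c sink L i q0 d0 \<longleftrightarrow>
     (\<exists>k. fst (traj L i q0 d0 k) = sink i \<and>
          (\<forall>j<k. empty_cell m n c sink (fst (traj L i q0 d0 j))))"

text \<open>Entry through a boundary edge: the packet enters grid cell q moving in direction d,
  coming from outside the grid (one entry per unit boundary edge).\<close>
definition boundary_entry :: "nat \<Rightarrow> nat \<Rightarrow> cell \<Rightarrow> dir \<Rightarrow> bool" where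
  "boundary_entry m n q d \<longleftrightarrow> in_grid m n q \<and> \<not> in_grid m n (shift q d (-1))"

definition perfect_layout :: "nat \<Rightarrow> nat \<Rightarrow> nat \<Rightarrow> (nat \<Rightarrow> cell) \<Rightarrow> (cell \<Rightarrow> (nat \<times> dir) option) \<Rightarrow> bool" where
  "perfect_layout m n c sink L \<longleftrightarrow> layout m n c sink L \<and>
     (\<forall>i<c. \<forall>q d. boundary_entry m n q d \<longrightarrow> succeeds m n c sink L i q d)"

definition two_away :: "nat \<Rightarrow> nat \<Rightarrow> nat \<Rightarrow> (nat \<Rightarrow> cell) \<Rightarrow> nat \<Rightarrow> dir \<Rightarrow> bool" where
  "two_away m n c sink s d \<longleftrightarrow>
     empty_cell m n c sink (shift (sink s) d 1) \<and> empty_cell m n c sink (shift (sink s) d 2) \<and>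
     \<not> in_grid m n (shift (sink s) d 3)"

definition adjacent :: "cell \<Rightarrow> cell \<Rightarrow> bool" where
  "adjacent p q \<longleftrightarrow> \<bar>fst p - fst q\<bar> + \<bar>snd p - snd q\<bar> = 1"

end

theory Submission
  imports Defs
begin

text \<open>
  Call the two vacant cells leading straight from a sink s to the boundary an arm of s.
  A packet of any other colour entering at the end of the arm runs into s unless it is
  deflected on the arm, so with at least three colours both arm cells carry foreign arrows
  and none of s.  Hence a packet of colour s that reaches s along an arm must have entered
  at the end of that arm.  The packet of colour s entering beside the end of an arm
  therefore reaches s from a non-arm side through a vacant neighbour; this is impossible
  when each side of s is an arm or another sink, which covers (a), (b) and (c).
  In (d) the same packet forces the arrow of s onto the gap cell between s and t.  If u
  lies beyond t, the packet of colour t entering at the end of a side arm of s can only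
  reach t through the gap, hence coming from s; if u lies beside t, the vacant cell
  beyond u is a boundary entry leading straight into u, which would need the arrows of
  both other colours.
\<close>

section \<open>Directions and shifts\<close>

definition perp :: "dir \<Rightarrow> dir \<Rightarrow> bool" where
  "perp a b \<longleftrightarrow> b \<noteq> a \<and> b \<noteq> opp a"

lemma opp_opp [simp]: "opp (opp d) = d"
  by (cases d) auto

lemma opp_eq_iff [simp]: "opp a = opp b \<longleftrightarrow> a = b"
  by (cases a; cases b) auto

lemma opp_neq [simp]: "opp d \<noteq> d" "d \<noteq> opp d"
  by (cases d; simp)+

lemma perp_sym: "perp a b \<Longrightarrow> perp b a"
  by (cases a; cases b) (auto simp: perp_def)

lemma perp_opp: "perp a b \<Longrightarrow> perp a (opp b)"
  by (cases a; cases b) (auto simp: perp_def)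

lemma ex_perp: "\<exists>b. perp a b"
  by (cases a) (auto simp: perp_def intro: exI[of _ North] exI[of _ East])

lemma dir_cases_distinct4:
  "distinct [a, b, c, d :: dir] \<Longrightarrow> x = a \<or> x = b \<or> x = c \<or> x = d"
  by (cases a; cases b; cases c; cases d; cases x) auto

lemma shift_0 [simp]: "shift p d 0 = p"
  by (simp add: shift_def)

lemma shift_shift_same [simp]: "shift (shift p d k) d l = shift p d (k + l)"
  by (simp add: shift_def algebra_simps)

lemma shift_opp [simp]: "shift p (opp d) k = shift p d (- k)"
  by (cases d) (auto simp: shift_def)

lemma corner_ne_shift:
  "perp a b \<Longrightarrow> \<bar>k\<bar> \<le> 2 \<Longrightarrow> shift (shift p a 2) b 1 \<noteq> shift p d k"
  by (cases a; cases b; cases d) (auto simp: perp_def shift_def)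

lemma in_grid_shift_perp:
  "perp a b \<Longrightarrow> in_grid m n (shift p a k) \<Longrightarrow> in_grid m n (shift p b l)
    \<Longrightarrow> in_grid m n (shift (shift p a k) b l)"
  by (cases a; cases b) (auto simp: perp_def in_grid_def shift_def)

lemma not_in_grid_shift_perp:
  "perp a b \<Longrightarrow> in_grid m n p \<Longrightarrow> \<not> in_grid m n (shift p b l)
    \<Longrightarrow> \<not> in_grid m n (shift (shift p a k) b l)"
  by (cases a; cases b) (auto simp: perp_def in_grid_def shift_def)

lemma ex_dir_iff: "(\<exists>d. P d) \<longleftrightarrow> P North \<or> P East \<or> P South \<or> P West"
  by (metis dir.exhaust)

lemma adjacent_imp_shift: "adjacent p q \<Longrightarrow> \<exists>d. q = shift p d 1"
  unfolding adjacent_def ex_dir_iff by (simp add: shift_def prod_eq_iff) arith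

section \<open>Trajectories\<close>

definition no_arrow :: "(cell \<Rightarrow> (nat \<times> dir) option) \<Rightarrow> nat \<Rightarrow> cell \<Rightarrow> bool" where
  "no_arrow L i p \<longleftrightarrow> (\<forall>e. L p \<noteq> Some (i, e))"

lemma turn_no_arrow: "no_arrow L i p \<Longrightarrow> turn L i p d = d"
  by (auto simp: turn_def no_arrow_def split: option.split)

lemma traj_0_no_arrow: "no_arrow L i q \<Longrightarrow> traj L i q d 0 = (q, d)"
  by (simp add: turn_no_arrow)

lemma traj_Suc_eq:
  "traj L i q d (Suc k) =
     (shift (fst (traj L i q d k)) (snd (traj L i q d k)) 1,
      turn L i (shift (fst (traj L i q d k)) (snd (traj L i q d k)) 1) (snd (traj L i q d k)))"
  by (simp add: split_beta Let_def)

declare traj.simps(2) [simp del]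

lemma traj_straight:
  assumes "\<forall>j\<le>k. no_arrow L i (shift q d (int j))"
  shows "traj L i q d k = (shift q d (int k), d)"
  using assms
proof (induction k)
  case 0
  then show ?case by (simp add: turn_no_arrow)
next
  case (Suc k)
  then have "traj L i q d k = (shift q d (int k), d)" by simp
  moreover have "no_arrow L i (shift q d (int (Suc k)))" using Suc.prems by blast
  ultimately show ?case by (simp add: traj_Suc_eq turn_no_arrow add.commute)
qed

lemma traj_step_back:
  assumes "traj L i q d (Suc j) = (p, e)" and "no_arrow L i p"
  shows "traj L i q d j = (shift p e (-1), e)"
proof -
  obtain p' e' where prev: "traj L i q d j = (p', e')" by fastforce
  with assms have "p = shift p' e' 1" "e = e'"
    by (auto simp: traj_Suc_eq turn_no_arrow)
  then show ?thesis using prev by simp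
qed

section \<open>Perfect layouts\<close>

lemma two_other_colours:
  "3 \<le> c \<Longrightarrow> \<exists>t u. t < c \<and> u < c \<and> t \<noteq> s \<and> u \<noteq> s \<and> t \<noteq> (u :: nat)"
  by (rule exI[of _ "if s = 0 then 1 else 0"], rule exI[of _ "if s = 2 then 1 else 2"]) auto

locale perfect_board =
  fixes m n c :: nat and sink :: "nat \<Rightarrow> cell" and L :: "cell \<Rightarrow> (nat \<times> dir) option"
  assumes board: "board m n c sink" and perfect: "perfect_layout m n c sink L"
begin

abbreviation vacant :: "cell \<Rightarrow> bool" where
  "vacant \<equiv> empty_cell m n c sink"

abbreviation arm :: "nat \<Rightarrow> dir \<Rightarrow> bool" where
  "arm \<equiv> two_away m n c sink"

lemma sink_eq_iff: "i < c \<Longrightarrow> j < c \<Longrightarrow> sink i = sink j \<longleftrightarrow> i = j"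
  using board by (auto simp: board_def inj_on_def)

lemma sink_not_vacant [simp]: "i < c \<Longrightarrow> \<not> vacant (sink i)"
  by (simp add: empty_cell_def is_sink_def)

lemma sink_in_grid: "i < c \<Longrightarrow> in_grid m n (sink i)"
  using board by (simp add: board_def)

lemma no_arrow_if_not_vacant: "\<not> vacant p \<Longrightarrow> no_arrow L i p"
  using perfect unfolding perfect_layout_def layout_def no_arrow_def by (metis prod.collapse)

lemma arm_vacant:
  "arm s d \<Longrightarrow> vacant (shift (sink s) d 1) \<and> vacant (shift (sink s) d 2)"
  by (simp add: two_away_def)

lemma arm_not_towards_sink: "arm s d \<Longrightarrow> t < c \<Longrightarrow> shift (sink s) d 1 \<noteq> sink t"
  using arm_vacant by fastforce

lemma arm_end_entry: "arm s d \<Longrightarrow> boundary_entry m n (shift (sink s) d 2) (opp d)"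
  by (simp add: two_away_def empty_cell_def boundary_entry_def)

lemma packet_reaches_sink:
  assumes "i < c" and "boundary_entry m n q d"
  obtains k where "fst (traj L i q d k) = sink i" and "\<forall>j<k. vacant (fst (traj L i q d j))"
  using perfect assms unfolding perfect_layout_def succeeds_def by blast

lemma first_nonvacant_is_own_sink:
  assumes "i < c" and "boundary_entry m n q d"
    and "\<forall>j'<j. vacant (fst (traj L i q d j'))" and "\<not> vacant (fst (traj L i q d j))"
  shows "fst (traj L i q d j) = sink i"
proof -
  obtain k where k: "fst (traj L i q d k) = sink i" "\<forall>j<k. vacant (fst (traj L i q d j))"
    using packet_reaches_sink assms(1,2) by blast
  have "\<not> k < j" using assms(1,3) k(1) by (metis sink_not_vacant)
  moreover have "\<not> j < k" using assms(4) k(2) by blast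
  ultimately show ?thesis using k(1) by simp
qed

lemma arm_has_foreign_arrow:
  assumes "s < c" "i < c" "i \<noteq> s" and arm: "arm s d"
  shows "\<not> no_arrow L i (shift (sink s) d 1) \<or> \<not> no_arrow L i (shift (sink s) d 2)"
proof (rule ccontr)
  assume "\<not> ?thesis"
  then have "\<forall>j\<le>2. no_arrow L i (shift (shift (sink s) d 2) (opp d) (int j))"
    using no_arrow_if_not_vacant[of "sink s"] \<open>s < c\<close> by (auto simp: le_Suc_eq numeral_2_eq_2)
  then have path: "fst (traj L i (shift (sink s) d 2) (opp d) j) = shift (sink s) d (2 - int j)"
    if "j \<le> 2" for j
    using traj_straight[of j] that by simp
  have "fst (traj L i (shift (sink s) d 2) (opp d) 2) = sink i"
  proof (rule first_nonvacant_is_own_sink[OF \<open>i < c\<close> arm_end_entry[OF arm]])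
    show "\<forall>j'<2. vacant (fst (traj L i (shift (sink s) d 2) (opp d) j'))"
      using arm_vacant[OF arm] path by (auto simp: less_Suc_eq numeral_2_eq_2)
    show "\<not> vacant (fst (traj L i (shift (sink s) d 2) (opp d) 2))"
      using path[of 2] \<open>s < c\<close> by simp
  qed
  then show False using path[of 2] assms(1-3) by (simp add: sink_eq_iff)
qed

lemma entry_before_sink_has_arrow:
  assumes "u < c" "i < c" "i \<noteq> u" and entry: "boundary_entry m n w v"
    and next_sink: "shift w v 1 = sink u" and "vacant w"
  shows "\<not> no_arrow L i w"
proof
  assume "no_arrow L i w"
  then have "traj L i w v 0 = (w, v)" by (rule traj_0_no_arrow)
  then have at_sink: "fst (traj L i w v 1) = sink u"
    using next_sink by (simp add: traj_Suc_eq)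
  have "fst (traj L i w v 1) = sink i"
    using first_nonvacant_is_own_sink[OF \<open>i < c\<close> entry, of 1] at_sink \<open>vacant w\<close> \<open>u < c\<close> by simp
  then show False using at_sink assms(1-3) by (simp add: sink_eq_iff)
qed

lemma arrival:
  assumes "i < c" and entry: "boundary_entry m n q d" and "q \<noteq> sink i"
  obtains dd j where "traj L i q d j = (shift (sink i) dd 1, opp dd)"
    and "\<forall>j'\<le>j. vacant (fst (traj L i q d j'))"
proof -
  obtain k where k: "fst (traj L i q d k) = sink i" "\<forall>j<k. vacant (fst (traj L i q d j))"
    using packet_reaches_sink[OF \<open>i < c\<close> entry] by blast
  then obtain j where j: "k = Suc j" using \<open>q \<noteq> sink i\<close> by (cases k) auto
  obtain p e where pe: "traj L i q d j = (p, e)" by fastforce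
  have "shift p e 1 = sink i" using k(1) j pe by (simp add: traj_Suc_eq)
  then have "p = shift (sink i) (opp e) 1" using shift_shift_same[of p e 1 "-1"] by simp
  then show thesis
    by (intro that[where dd = "opp e" and j = j]) (use pe k(2) j in auto)
qed

context
  assumes three_colours: "3 \<le> c"
begin

lemma arm_no_own_arrow:
  assumes "s < c" and "arm s d"
  shows "no_arrow L s (shift (sink s) d 1)" and "no_arrow L s (shift (sink s) d 2)"
proof -
  obtain t u where tu: "t < c" "u < c" "t \<noteq> s" "u \<noteq> s" "t \<noteq> u"
    using two_other_colours[OF three_colours] by blast
  note arm_has_foreign_arrow[OF \<open>s < c\<close> tu(1,3) \<open>arm s d\<close>]
    and arm_has_foreign_arrow[OF \<open>s < c\<close> tu(2,4) \<open>arm s d\<close>]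
  then show "no_arrow L s (shift (sink s) d 1)" and "no_arrow L s (shift (sink s) d 2)"
    using tu unfolding no_arrow_def by (metis option.inject prod.inject)+
qed

lemma vacant_entry_not_before_sink:
  assumes "u < c" and "boundary_entry m n w v" and "vacant w"
  shows "shift w v 1 \<noteq> sink u"
proof
  assume next_sink: "shift w v 1 = sink u"
  obtain i j where ij: "i < c" "j < c" "i \<noteq> u" "j \<noteq> u" "i \<noteq> j"
    using two_other_colours[OF three_colours] by blast
  have "\<not> no_arrow L i w" "\<not> no_arrow L j w"
    using entry_before_sink_has_arrow[OF \<open>u < c\<close> _ _ assms(2) next_sink assms(3)] ij by auto
  then show False using ij(5) unfolding no_arrow_def by (metis option.inject prod.inject)
qed

lemma entry_via_arm:
  assumes "i < c" and arm: "arm i dd" and entry: "boundary_entry m n q d"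
    and at: "traj L i q d j = (shift (sink i) dd 1, opp dd)"
    and path: "\<forall>j'\<le>j. vacant (fst (traj L i q d j'))"
  shows "q = shift (sink i) dd 2 \<and> d = opp dd"
proof -
  note no_arrow = arm_no_own_arrow[OF \<open>i < c\<close> arm]
  have "j \<noteq> 0"
  proof
    assume "j = 0"
    with at no_arrow(1) have "q = shift (sink i) dd 1" "d = opp dd"
      by (auto simp: turn_no_arrow)
    then have "in_grid m n (shift q d (-1))"
      using arm_vacant[OF arm] by (simp add: empty_cell_def)
    then show False using entry by (simp add: boundary_entry_def)
  qed
  then obtain j' where j': "j = Suc j'" by (cases j) auto
  have prev: "traj L i q d j' = (shift (sink i) dd 2, opp dd)"
    using traj_step_back[OF at[unfolded j'] no_arrow(1)] by simp
  have "j' = 0"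
  proof (rule ccontr)
    assume "j' \<noteq> 0"
    then obtain j'' where j'': "j' = Suc j''" by (cases j') auto
    have "fst (traj L i q d j'') = shift (sink i) dd 3"
      using traj_step_back[OF prev[unfolded j''] no_arrow(2)] by simp
    moreover have "vacant (fst (traj L i q d j''))" using path j' j'' by simp
    ultimately show False using arm by (simp add: two_away_def empty_cell_def)
  qed
  with prev have "q = shift (sink i) dd 2" and "turn L i q d = opp dd" by auto
  then show ?thesis using no_arrow(2) by (simp add: turn_no_arrow)
qed

lemma corner_entry:
  assumes "s < c" and arm: "arm s a" and "perp a b" and side: "in_grid m n (shift (sink s) b 1)"
  obtains dd j
  where "traj L s (shift (shift (sink s) a 2) b 1) (opp a) j = (shift (sink s) dd 1, opp dd)"
    and "\<forall>j'\<le>j. vacant (fst (traj L s (shift (shift (sink s) a 2) b 1) (opp a) j'))"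
    and "\<not> arm s dd" and "0 < j"
proof -
  let ?q = "shift (shift (sink s) a 2) b 1"
  have "in_grid m n ?q"
    using in_grid_shift_perp[OF \<open>perp a b\<close> _ side] arm by (simp add: two_away_def empty_cell_def)
  moreover have "\<not> in_grid m n (shift (shift (sink s) b 1) a 3)"
    using not_in_grid_shift_perp[OF perp_sym[OF \<open>perp a b\<close>] sink_in_grid[OF \<open>s < c\<close>]] arm
    by (simp add: two_away_def)
  moreover have "shift ?q (opp a) (-1) = shift (shift (sink s) b 1) a 3"
    by (cases a) (simp_all add: shift_def)
  ultimately have entry: "boundary_entry m n ?q (opp a)" by (simp add: boundary_entry_def)
  have "?q \<noteq> sink s" using corner_ne_shift[OF \<open>perp a b\<close>, of 0] by simp
  then obtain dd j where at: "traj L s ?q (opp a) j = (shift (sink s) dd 1, opp dd)"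
    and path: "\<forall>j'\<le>j. vacant (fst (traj L s ?q (opp a) j'))"
    using arrival[OF \<open>s < c\<close> entry] by blast
  have "\<not> arm s dd"
  proof
    assume "arm s dd"
    with entry_via_arm[OF \<open>s < c\<close> _ entry at path] have "?q = shift (sink s) a 2" by auto
    then show False using corner_ne_shift[OF \<open>perp a b\<close>, of 2] by simp
  qed
  moreover have "0 < j"
    using at corner_ne_shift[OF \<open>perp a b\<close>, of 1] by (cases j) auto
  ultimately show thesis using that at path by blast
qed

lemma enclosed_sink_impossible:
  assumes "s < c" and "arm s a"
    and enclosed: "\<forall>d. arm s d \<or> (\<exists>t<c. shift (sink s) d 1 = sink t)"
  shows False
proof -
  obtain b where "perp a b" using ex_perp by blast
  have "in_grid m n (shift (sink s) b 1)"
    using enclosed sink_in_grid by (auto simp: two_away_def empty_cell_def)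
  then obtain dd j
    where at: "traj L s (shift (shift (sink s) a 2) b 1) (opp a) j = (shift (sink s) dd 1, opp dd)"
      and path: "\<forall>j'\<le>j. vacant (fst (traj L s (shift (shift (sink s) a 2) b 1) (opp a) j'))"
      and "\<not> arm s dd"
    using corner_entry[OF \<open>s < c\<close> \<open>arm s a\<close> \<open>perp a b\<close>] by blast
  have "vacant (shift (sink s) dd 1)" using path[rule_format, of j] at by simp
  then show False using enclosed[rule_format, of dd] \<open>\<not> arm s dd\<close> by auto
qed

lemma three_arms_adjacent_sink_impossible:
  assumes "s < c" and "distinct [d1, d2, d3]"
    and arms: "arm s d1" "arm s d2" "arm s d3"
    and "t < c" and "adjacent (sink s) (sink t)"
  shows False
proof -
  obtain dt where dt: "shift (sink s) dt 1 = sink t"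
    using adjacent_imp_shift \<open>adjacent (sink s) (sink t)\<close> by metis
  have "dt \<noteq> d1" "dt \<noteq> d2" "dt \<noteq> d3"
    using arm_not_towards_sink[OF _ \<open>t < c\<close>] arms dt by metis+
  then have four: "distinct [d1, d2, d3, dt]" using \<open>distinct [d1, d2, d3]\<close> by simp
  have "\<forall>d. arm s d \<or> (\<exists>t<c. shift (sink s) d 1 = sink t)"
  proof
    fix d
    from dir_cases_distinct4[OF four, of d] show "arm s d \<or> (\<exists>t<c. shift (sink s) d 1 = sink t)"
      using arms dt \<open>t < c\<close> by auto
  qed
  then show False using enclosed_sink_impossible[OF \<open>s < c\<close> \<open>arm s d1\<close>] by blast
qed

lemma two_arms_two_adjacent_sinks_impossible:
  assumes "s < c" and "d1 \<noteq> d2" and arms: "arm s d1" "arm s d2"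
    and "t < c" "u < c" "t \<noteq> u"
    and "adjacent (sink s) (sink t)" and "adjacent (sink s) (sink u)"
  shows False
proof -
  obtain dt du where dt: "shift (sink s) dt 1 = sink t" and du: "shift (sink s) du 1 = sink u"
    using adjacent_imp_shift assms(8,9) by metis
  have "dt \<noteq> du" using dt du assms(5-7) sink_eq_iff by metis
  moreover have "dt \<noteq> d1" "dt \<noteq> d2" "du \<noteq> d1" "du \<noteq> d2"
    using arm_not_towards_sink[OF arms(1)] arm_not_towards_sink[OF arms(2)] dt du assms(5,6)
    by metis+
  ultimately have four: "distinct [d1, d2, dt, du]" using \<open>d1 \<noteq> d2\<close> by simp
  have "\<forall>d. arm s d \<or> (\<exists>t<c. shift (sink s) d 1 = sink t)"
  proof
    fix d
    from dir_cases_distinct4[OF four, of d] show "arm s d \<or> (\<exists>t<c. shift (sink s) d 1 = sink t)"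
      using arms dt du assms(5,6) by auto
  qed
  then show False using enclosed_sink_impossible[OF \<open>s < c\<close> \<open>arm s d1\<close>] by blast
qed

text \<open>A packet of colour s entering next to the end of a perpendicular arm must come in
  through the gap; without an own arrow there it would come from the occupied cell behind.\<close>
lemma gap_has_own_arrow:
  assumes "s < c" and arms: "\<forall>x. x \<noteq> d \<longrightarrow> arm s x"
    and "\<not> vacant (shift (sink s) d 2)"
  shows "\<not> no_arrow L s (shift (sink s) d 1)"
proof
  assume no_arrow: "no_arrow L s (shift (sink s) d 1)"
  obtain a where "perp d a" using ex_perp by blast
  then have "perp a (opp d)" by (rule perp_opp[OF perp_sym])
  have "arm s a" using arms \<open>perp d a\<close> by (simp add: perp_def)
  have "in_grid m n (shift (sink s) (opp d) 1)"
    using arms[rule_format, of "opp d"] by (simp add: two_away_def empty_cell_def)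
  then obtain dd j
    where at: "traj L s (shift (shift (sink s) a 2) (opp d) 1) (opp a) j = (shift (sink s) dd 1, opp dd)"
      and path: "\<forall>j'\<le>j. vacant (fst (traj L s (shift (shift (sink s) a 2) (opp d) 1) (opp a) j'))"
      and "\<not> arm s dd" and "0 < j"
    using corner_entry[OF \<open>s < c\<close> \<open>arm s a\<close> \<open>perp a (opp d)\<close>] by blast
  have "dd = d" using \<open>\<not> arm s dd\<close> arms by metis
  obtain j' where j': "j = Suc j'" using \<open>0 < j\<close> by (cases j) auto
  have "fst (traj L s (shift (shift (sink s) a 2) (opp d) 1) (opp a) j') = shift (sink s) d 2"
    using traj_step_back[OF at[unfolded j' \<open>dd = d\<close>] no_arrow] by simp
  moreover have "vacant (fst (traj L s (shift (shift (sink s) a 2) (opp d) 1) (opp a) j'))"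
    using path j' by simp
  ultimately show False using \<open>\<not> vacant (shift (sink s) d 2)\<close> by simp
qed

end

context
  fixes s t u :: nat and d :: dir
  assumes c_eq_3: "c = 3" and colours: "s < c" "t < c" "u < c" "distinct [s, t, u]"
    and arms: "\<forall>x. x \<noteq> d \<longrightarrow> arm s x"
    and gap: "vacant (shift (sink s) d 1)" and sink_behind_gap: "shift (sink s) d 2 = sink t"
begin

lemma vacant_unless_sink:
  assumes "in_grid m n p" "p \<noteq> sink s" "p \<noteq> sink t" "p \<noteq> sink u"
  shows "vacant p"
proof -
  have "\<forall>i<c. i = s \<or> i = t \<or> i = u" using c_eq_3 colours by auto
  then show ?thesis using assms by (auto simp: empty_cell_def is_sink_def)
qed

lemma gap_no_arrow: "no_arrow L t (shift (sink s) d 1)"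
proof -
  have "\<not> vacant (shift (sink s) d 2)" using sink_behind_gap colours(2) by simp
  then have "\<not> no_arrow L s (shift (sink s) d 1)"
    using gap_has_own_arrow[OF _ colours(1) arms] c_eq_3 by simp
  then show ?thesis using colours(4) by (auto simp: no_arrow_def)
qed

lemma sink_not_beside:
  assumes "perp d e"
  shows "sink u \<noteq> shift (sink t) e 1"
proof
  assume u: "sink u = shift (sink t) e 1"
  let ?w = "shift (sink u) e 1"
  have w: "?w = shift (shift (sink s) d 2) e 2" using u sink_behind_gap by simp
  have "arm s e" using arms \<open>perp d e\<close> by (simp add: perp_def)
  have "in_grid m n (shift (shift (sink s) d 2) e 2)"
    by (rule in_grid_shift_perp[OF \<open>perp d e\<close>])
      (use sink_behind_gap sink_in_grid[OF colours(2)] \<open>arm s e\<close> in \<open>simp_all add: two_away_def empty_cell_def\<close>)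
  then have "in_grid m n ?w" using w by simp
  moreover have "\<not> in_grid m n (shift ?w (opp e) (-1))"
    using not_in_grid_shift_perp[OF \<open>perp d e\<close> sink_in_grid[OF colours(1)]] \<open>arm s e\<close>
    unfolding w by (simp add: two_away_def)
  ultimately have entry: "boundary_entry m n ?w (opp e)" by (simp add: boundary_entry_def)
  have "?w \<noteq> sink s \<and> ?w \<noteq> sink t \<and> ?w \<noteq> sink u"
    unfolding w u sink_behind_gap[symmetric] using \<open>perp d e\<close>
    by (cases d; cases e) (auto simp: perp_def shift_def prod_eq_iff)
  then have "vacant ?w" using vacant_unless_sink \<open>in_grid m n ?w\<close> by blast
  then have "shift ?w (opp e) 1 \<noteq> sink u"
    using vacant_entry_not_before_sink[OF _ colours(3) entry] c_eq_3 by simp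
  then show False by simp
qed

lemma arm_of_sink_behind_gap:
  assumes u: "sink u = shift (sink t) d 1" and "perp d e"
  shows "arm t e"
proof -
  have "arm s e" using arms \<open>perp d e\<close> by (simp add: perp_def)
  have "vacant (shift (sink t) e k)" if k: "k = 1 \<or> k = 2" for k
  proof -
    have "in_grid m n (shift (shift (sink s) d 2) e k)"
      by (rule in_grid_shift_perp[OF \<open>perp d e\<close>])
        (use k sink_behind_gap sink_in_grid[OF colours(2)] \<open>arm s e\<close> in
          \<open>auto simp: two_away_def empty_cell_def\<close>)
    moreover have "shift (shift (sink s) d 2) e k \<notin> {sink s, shift (sink s) d 2, shift (shift (sink s) d 2) d 1}"
      using k \<open>perp d e\<close> by (cases d; cases e) (auto simp: perp_def shift_def prod_eq_iff)
    ultimately show ?thesis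
      using vacant_unless_sink u sink_behind_gap by auto
  qed
  moreover have "\<not> in_grid m n (shift (shift (sink s) d 2) e 3)"
    using not_in_grid_shift_perp[OF \<open>perp d e\<close> sink_in_grid[OF colours(1)]] \<open>arm s e\<close>
    by (simp add: two_away_def)
  ultimately show ?thesis using sink_behind_gap by (simp add: two_away_def)
qed

lemma sink_not_beyond:
  "sink u \<noteq> shift (sink t) d 1"
proof
  assume u: "sink u = shift (sink t) d 1"
  obtain e where "perp d e" using ex_perp by blast
  then have "arm s e" using arms by (simp add: perp_def)
  let ?q = "shift (sink s) e 2"
  have entry: "boundary_entry m n ?q (opp e)" by (rule arm_end_entry[OF \<open>arm s e\<close>])
  have corner: "?q \<noteq> shift (shift (sink s) d 2) e 2" "?q \<noteq> shift (sink s) d k" if "k \<noteq> 0" for k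
    using \<open>perp d e\<close> that by (cases d; cases e; auto simp: perp_def shift_def prod_eq_iff)+
  have "?q \<noteq> sink t" using corner(2)[of 2] sink_behind_gap by simp
  then obtain dd j where at: "traj L t ?q (opp e) j = (shift (sink t) dd 1, opp dd)"
    and path: "\<forall>j'\<le>j. vacant (fst (traj L t ?q (opp e) j'))"
    using arrival[OF colours(2) entry] by blast
  have "\<not> arm t dd"
  proof
    assume "arm t dd"
    then have "?q = shift (sink t) dd 2" "dd = e"
      using entry_via_arm[OF _ colours(2) _ entry at path] c_eq_3 by auto
    then show False using corner(1)[of 1] sink_behind_gap by simp
  qed
  then have "dd = d \<or> dd = opp d" using arm_of_sink_behind_gap[OF u] by (auto simp: perp_def)
  moreover have "dd \<noteq> d"
    using path[rule_format, of j] at u[symmetric] colours(3) by auto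
  moreover have "dd \<noteq> opp d"
  proof
    assume "dd = opp d"
    then have at_gap: "traj L t ?q (opp e) j = (shift (sink s) d 1, d)"
      using at sink_behind_gap[symmetric] by simp
    have "j \<noteq> 0"
    proof
      assume "j = 0"
      then have "?q = shift (sink s) d 1" using arg_cong[OF at_gap, of fst] by simp
      then show False using corner(2)[of 1] by simp
    qed
    then obtain j' where j': "j = Suc j'" by (cases j) auto
    have "fst (traj L t ?q (opp e) j') = sink s"
      using traj_step_back[OF at_gap[unfolded j'] gap_no_arrow] by simp
    moreover have "vacant (fst (traj L t ?q (opp e) j'))" using path j' by simp
    ultimately show False using colours(1) by simp
  qed
  ultimately show False by blast
qed

lemma sinks_not_adjacent: "\<not> adjacent (sink t) (sink u)"
proof
  assume "adjacent (sink t) (sink u)"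
  then obtain e where e: "sink u = shift (sink t) e 1" using adjacent_imp_shift by blast
  consider "e = d" | "e = opp d" | "perp d e" by (auto simp: perp_def)
  then show False
  proof cases
    case 1
    then show False using sink_not_beyond e by simp
  next
    case 2
    then have "sink u = shift (sink s) d 1" using e sink_behind_gap[symmetric] by simp
    then show False using gap sink_not_vacant[OF colours(3)] by simp
  next
    case 3
    then show False using sink_not_beside[OF 3] e by simp
  qed
qed

end

end

theorem mainTheorem10:
  fixes m n :: nat and sink :: "nat \<Rightarrow> cell"
  assumes B: "board m n 3 sink"
  assumes cond:
    "(\<exists>s<3. (\<exists>d1 d2 d3. distinct [d1, d2, d3] \<and> two_away m n 3 sink s d1 \<and>
                two_away m n 3 sink s d2 \<and> two_away m n 3 sink s d3) \<and>
            (\<exists>t<3. t \<noteq> s \<and> adjacent (sink s) (sink t)))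
   \<or> (\<exists>s<3. (\<exists>d1 d2. d2 \<noteq> d1 \<and> d2 \<noteq> opp d1 \<and> two_away m n 3 sink s d1 \<and>
                two_away m n 3 sink s d2) \<and>
            (\<forall>t<3. t \<noteq> s \<longrightarrow> adjacent (sink s) (sink t)))
   \<or> (\<exists>s<3. (\<exists>d. two_away m n 3 sink s d \<and> two_away m n 3 sink s (opp d)) \<and>
            (\<forall>t<3. t \<noteq> s \<longrightarrow> adjacent (sink s) (sink t)))
   \<or> (\<exists>s<3. \<exists>t<3. \<exists>u<3. distinct [s, t, u] \<and>
        (\<exists>d1 d2 d3 d4. distinct [d1, d2, d3, d4] \<and> two_away m n 3 sink s d1 \<and>
            two_away m n 3 sink s d2 \<and> two_away m n 3 sink s d3 \<and>
            empty_cell m n 3 sink (shift (sink s) d4 1) \<and> shift (sink s) d4 2 = sink t) \<and>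
        adjacent (sink t) (sink u))"
  shows "\<not> (\<exists>L. perfect_layout m n 3 sink L)"
proof
  assume "\<exists>L. perfect_layout m n 3 sink L"
  then obtain L where "perfect_layout m n 3 sink L" ..
  with B interpret perfect_board m n 3 sink L by unfold_locales
  have two_adjacent: "\<exists>t u. t < 3 \<and> u < 3 \<and> t \<noteq> u \<and> adjacent (sink s) (sink t) \<and> adjacent (sink s) (sink u)"
    if "\<forall>t<3. t \<noteq> s \<longrightarrow> adjacent (sink s) (sink t)" for s
    using two_other_colours[of 3 s] that by auto
  from cond show False
  proof (elim disjE exE conjE)
    fix s d1 d2 d3 t
    assume "s < 3" "distinct [d1, d2, d3]" "arm s d1" "arm s d2" "arm s d3" "t < 3"
      "adjacent (sink s) (sink t)"
    then show False using three_arms_adjacent_sink_impossible[of s d1 d2 d3 t] by simp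
  next
    \<comment> \<open>cases (b) and (c) only use that the two arms are distinct\<close>
    fix s d1 d2
    assume "s < 3" "d2 \<noteq> d1" "arm s d1" "arm s d2" "\<forall>t<3. t \<noteq> s \<longrightarrow> adjacent (sink s) (sink t)"
    moreover obtain t u where "t < 3" "u < 3" "t \<noteq> u" "adjacent (sink s) (sink t)" "adjacent (sink s) (sink u)"
      using two_adjacent calculation(5) by blast
    ultimately show False using two_arms_two_adjacent_sinks_impossible[of s d1 d2 t u] by simp
  next
    fix s d
    assume "s < 3" "arm s d" "arm s (opp d)" "\<forall>t<3. t \<noteq> s \<longrightarrow> adjacent (sink s) (sink t)"
    moreover obtain t u where "t < 3" "u < 3" "t \<noteq> u" "adjacent (sink s) (sink t)" "adjacent (sink s) (sink u)"
      using two_adjacent calculation(4) by blast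
    ultimately show False using two_arms_two_adjacent_sinks_impossible[of s d "opp d" t u] by simp
  next
    fix s t u d1 d2 d3 d4
    assume "s < 3" "t < 3" "u < 3" "distinct [s, t, u]" and four: "distinct [d1, d2, d3, d4]"
      and arms: "arm s d1" "arm s d2" "arm s d3"
      and "vacant (shift (sink s) d4 1)" "shift (sink s) d4 2 = sink t" "adjacent (sink t) (sink u)"
    moreover have "\<forall>x. x \<noteq> d4 \<longrightarrow> arm s x"
    proof (intro allI impI)
      fix x
      assume "x \<noteq> d4"
      with dir_cases_distinct4[OF four, of x] arms show "arm s x" by auto
    qed
    ultimately show False using sinks_not_adjacent[of s t u d4] by simp
  qed
qed

end
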